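(* Let $\kappa\ge1$ and $n\ge1$ be integers, let $G$ be a binary $\kappa\times n$ matrix, and let $q$ be its code definition vector. For a subset $R\subseteq\{1,\dots,n\}$ let $G_R$ be the submatrix of $G$ consisting of the columns indexed by $R$ (rank over $\mathbb{F}_2$, with $\mathrm{rank}(G_\emptyset)=0$). (a) For an integer $0<\mu\le n$, let $R$ be a uniformly random $\mu$-element subset of $\{1,\dots,n\}$ and set $L(n,\mu,q)=\mathbb{E}\big[|R|-\mathrm{rank}(G_R)\big]$. Then $L(n,\mu,q)=\mu-\kappa+\sum_{\delta=1}^{\kappa}K_\delta\sum_{S\in\Xi(W,\kappa-\delta)}\Phi(S,n,\mu,q).$ (b) For $0\le\epsilon\le1$, let $R$ be a random subset of $\{1,\dots,n\}$ containing each index independently with probability $1-\epsilon$, and set $l(n,\epsilon,q)=\mathbb{E}\big[|R|-\mathrm{rank}(G_R)\big]$. Then $l(n,\epsilon,q)=n(1-\epsilon)-\kappa+\sum_{\delta=1}^{\kappa}K_\delta\sum_{S\in\Xi(W,\kappa-\delta)}\phi(S,n,\epsilon,q),$ where in both cases $K_\delta=\prod_{i=1}^{\delta-1}(1-2^i)$ (so $K_1=1$).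
   Context: $W=\mathbb{F}_2^\kappa$; $\nu(i)\in W$ is the binary expansion of $i\in\{0,\dots,2^\kappa-1\}$. The code definition vector of a binary $\kappa\times n$ matrix $G$ is $q=(q_0,\dots,q_{2^\kappa-1})$ with $q_i$ equal to the number of columns of $G$ equal to $\nu(i)$, divided by $n$. For a subspace $S\subseteq W$, $\zeta(S,q)=\sum_{i:\nu(i)\in S}q_i$; $\Xi(S,d)$ is the set of all $d$-dimensional subspaces of $S$. Define $\Phi(S,n,\mu,q)=\prod_{i=0}^{\mu-1}\frac{\zeta(S,q)-i/n}{1-i/n}$ and $\phi(S,n,\epsilon,q)=\epsilon^{n(1-\zeta(S,q))}$ (convention $0^0=1$). (In the wiretap setting, for a coset code with base-code generator matrix $G$ and uniformly distributed message, $|R|-\mathrm{rank}(G_R)$ is the eavesdropper's information loss $I(M;Z)$ given revealed positions $R$, so $L$ and $l$ are the expected equivocation losses.) *)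

theory Defs
  imports Complex_Main "HOL-Library.Z2" "HOL-Library.Function_Algebras"
begin

text \<open>Vectors of W = F_2^kappa are represented as functions nat => bit that vanish
  at all coordinates >= kappa. Vector space structure over the field bit = F_2.\<close>

definition vscale :: "bit \<Rightarrow> (nat \<Rightarrow> bit) \<Rightarrow> (nat \<Rightarrow> bit)" where
  "vscale c v = (\<lambda>i. c * v i)"

definition Wsp :: "nat \<Rightarrow> (nat \<Rightarrow> bit) set" where
  "Wsp \<kappa> = {v. \<forall>i\<ge>\<kappa>. v i = 0}"

definition F2subspace :: "(nat \<Rightarrow> bit) set \<Rightarrow> bool" where
  "F2subspace S = module.subspace vscale S"

definition F2dim :: "(nat \<Rightarrow> bit) set \<Rightarrow> nat" where
  "F2dim S = vector_space.dim vscale S"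

definition Xi :: "(nat \<Rightarrow> bit) set \<Rightarrow> nat \<Rightarrow> (nat \<Rightarrow> bit) set set" where
  "Xi S d = {T. F2subspace T \<and> T \<subseteq> S \<and> F2dim T = d}"

text \<open>binary expansion nu(i) in W (bit j of i is coordinate j)\<close>
definition nu :: "nat \<Rightarrow> nat \<Rightarrow> (nat \<Rightarrow> bit)" where
  "nu \<kappa> i = (\<lambda>j. if j < \<kappa> then of_bool (odd (i div 2 ^ j)) else 0)"

text \<open>A binary kappa x n matrix G is given as G :: nat => nat => bit (row, column),
  rows 0..<kappa, columns 0..<n; column j as a vector of W.\<close>
definition col :: "nat \<Rightarrow> (nat \<Rightarrow> nat \<Rightarrow> bit) \<Rightarrow> nat \<Rightarrow> (nat \<Rightarrow> bit)" where
  "col \<kappa> G j = (\<lambda>i. if i < \<kappa> then G i j else 0)"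

definition rankR :: "nat \<Rightarrow> (nat \<Rightarrow> nat \<Rightarrow> bit) \<Rightarrow> nat set \<Rightarrow> nat" where
  "rankR \<kappa> G R = F2dim (col \<kappa> G ` R)"

definition cdv :: "nat \<Rightarrow> nat \<Rightarrow> (nat \<Rightarrow> nat \<Rightarrow> bit) \<Rightarrow> nat \<Rightarrow> real" where
  "cdv \<kappa> n G i = real (card {j. j < n \<and> col \<kappa> G j = nu \<kappa> i}) / real n"

definition zeta :: "nat \<Rightarrow> (nat \<Rightarrow> bit) set \<Rightarrow> (nat \<Rightarrow> real) \<Rightarrow> real" where
  "zeta \<kappa> S q = (\<Sum>i\<in>{i. i < 2 ^ \<kappa> \<and> nu \<kappa> i \<in> S}. q i)"

definition Phi :: "nat \<Rightarrow> (nat \<Rightarrow> bit) set \<Rightarrow> nat \<Rightarrow> nat \<Rightarrow> (nat \<Rightarrow> real) \<Rightarrow> real" where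
  "Phi \<kappa> S n \<mu> q = (\<Prod>i<\<mu>. (zeta \<kappa> S q - real i / real n) / (1 - real i / real n))"

text \<open>phi with the convention 0^0 = 1\<close>
definition phi :: "nat \<Rightarrow> (nat \<Rightarrow> bit) set \<Rightarrow> nat \<Rightarrow> real \<Rightarrow> (nat \<Rightarrow> real) \<Rightarrow> real" where
  "phi \<kappa> S n \<epsilon> q = (let e = real n * (1 - zeta \<kappa> S q) in if e = 0 then 1 else \<epsilon> powr e)"

definition Kc :: "nat \<Rightarrow> real" where
  "Kc \<delta> = (\<Prod>i\<in>{1..<\<delta>}. 1 - 2 ^ i)"

definition Lloss :: "nat \<Rightarrow> nat \<Rightarrow> (nat \<Rightarrow> nat \<Rightarrow> bit) \<Rightarrow> nat \<Rightarrow> real" where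
  "Lloss \<kappa> n G \<mu> = (\<Sum>R\<in>{R. R \<subseteq> {..<n} \<and> card R = \<mu>}.
       real (card R) - real (rankR \<kappa> G R)) / real (n choose \<mu>)"

definition lloss :: "nat \<Rightarrow> nat \<Rightarrow> (nat \<Rightarrow> nat \<Rightarrow> bit) \<Rightarrow> real \<Rightarrow> real" where
  "lloss \<kappa> n G \<epsilon> = (\<Sum>R\<in>Pow {..<n}.
       (1 - \<epsilon>) ^ card R * \<epsilon> ^ (n - card R) * (real (card R) - real (rankR \<kappa> G R)))"

end

theory Submission
  imports Defs "HOL-Library.FuncSet"
begin

text \<open>If \<open>U = span X\<close> has codimension \<open>m\<close> in \<open>W\<close>, the subspaces of codimension
  \<open>\<delta>\<close> containing \<open>X\<close> are those containing \<open>U\<close>, and double counting the pairs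
  \<open>(S, v)\<close> with \<open>v \<in> S - U\<close> shows that there are exactly \<open>[m, \<delta>]\<^sub>2\<close> of them
  (a Gaussian binomial coefficient). The constants \<open>K\<^sub>\<delta>\<close> satisfy
  \<open>\<Sum>\<^sub>\<delta> K\<^sub>\<delta> [m, \<delta>]\<^sub>2 = m\<close>, which telescopes through the q-Pascal rule. Hence
  \<open>\<kappa> - rank G\<^sub>R\<close> is the sum over \<open>\<delta>\<close> of \<open>K\<^sub>\<delta>\<close> times the number of
  \<open>S \<in> \<Xi>(W, \<kappa> - \<delta>)\<close> containing all columns of \<open>G\<^sub>R\<close>. Taking expectations and
  exchanging the sums, it remains to compute the probability that all columns of \<open>G\<^sub>R\<close>
  lie in \<open>S\<close>; it depends only on the number \<open>n \<zeta>(S, q)\<close> of columns of \<open>G\<close> in \<open>S\<close>,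
  and equals \<open>\<Phi>\<close> for a uniform \<open>\<mu>\<close>-subset and \<open>\<phi>\<close> for independent erasures.\<close>

section \<open>Subspaces of \<open>\<bbbF>\<^sub>2\<^sup>\<kappa>\<close>\<close>

interpretation F: vector_space vscale
  by unfold_locales (auto simp: vscale_def fun_eq_iff algebra_simps)

lemma card_UNIV_bit: "card (UNIV :: bit set) = 2"
proof -
  have "(UNIV :: bit set) = {0, 1}" by (auto intro: bit.exhaust)
  moreover have "card {0 :: bit, 1} = 2" by simp
  ultimately show ?thesis by metis
qed

lemma span_insert_bit:
  "F.span (insert a S) = F.span S \<union> (\<lambda>y. y + a) ` F.span S"
proof -
  have "x \<in> F.span (insert a S) \<longleftrightarrow> x \<in> F.span S \<or> x - a \<in> F.span S" for x
  proof -
    have "(\<exists>k. x - vscale k a \<in> F.span S) \<longleftrightarrow> x - vscale 0 a \<in> F.span S \<or> x - vscale 1 a \<in> F.span S"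
      by (metis bit.exhaust)
    moreover have "vscale 0 a = 0" "vscale 1 a = a" by (auto simp: vscale_def fun_eq_iff)
    ultimately show ?thesis by (simp add: F.span_insert)
  qed
  moreover have "x - a \<in> F.span S \<longleftrightarrow> x \<in> (\<lambda>y. y + a) ` F.span S" for x
    by (auto simp: image_iff) (metis diff_add_cancel)
  ultimately show ?thesis by blast
qed

lemma card_span_insert:
  assumes "finite (F.span S)" "a \<notin> F.span S"
  shows "card (F.span (insert a S)) = 2 * card (F.span S)"
proof -
  have "F.span S \<inter> (\<lambda>y. y + a) ` F.span S = {}"
  proof (rule ccontr)
    assume "F.span S \<inter> (\<lambda>y. y + a) ` F.span S \<noteq> {}"
    then obtain y where "y \<in> F.span S" "y + a \<in> F.span S" by auto
    then have "(y + a) - y \<in> F.span S" by (intro F.span_diff)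
    with assms(2) show False by simp
  qed
  moreover have "inj_on (\<lambda>y. y + a) (F.span S)" by (rule inj_onI) simp
  ultimately show ?thesis
    unfolding span_insert_bit using assms(1) by (simp add: card_Un_disjoint card_image)
qed

lemma card_span_independent:
  assumes "finite B" "F.independent B"
  shows "finite (F.span B) \<and> card (F.span B) = 2 ^ card B"
  using assms
proof (induction B rule: finite_induct)
  case (insert x B)
  then have "F.independent B" "x \<notin> F.span B" using F.independent_insert by auto
  with insert.IH have "finite (F.span B)" "card (F.span B) = 2 ^ card B" by auto
  moreover from this(1) have "finite (F.span (insert x B))"
    unfolding span_insert_bit by simp
  ultimately show ?case using insert.hyps card_span_insert[of B x] \<open>x \<notin> F.span B\<close> by simp
qed simp

lemma bij_betw_Wsp_PiE:
  "bij_betw (\<lambda>v. restrict v {..<\<kappa>}) (Wsp \<kappa>) ({..<\<kappa>} \<rightarrow>\<^sub>E UNIV)"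
proof (rule bij_betw_byWitness[where f' = "\<lambda>f i. if i < \<kappa> then f i else 0"])
  show "\<forall>a\<in>Wsp \<kappa>. (\<lambda>i. if i < \<kappa> then restrict a {..<\<kappa>} i else 0) = a"
    by (auto simp: Wsp_def fun_eq_iff)
  show "\<forall>a'\<in>{..<\<kappa>} \<rightarrow>\<^sub>E UNIV. restrict (\<lambda>i. if i < \<kappa> then a' i else 0) {..<\<kappa>} = a'"
    by (auto simp: fun_eq_iff PiE_def extensional_def)
  show "(\<lambda>v. restrict v {..<\<kappa>}) ` Wsp \<kappa> \<subseteq> {..<\<kappa>} \<rightarrow>\<^sub>E UNIV"
    by (auto simp: PiE_def)
  show "(\<lambda>f i. if i < \<kappa> then f i else 0) ` ({..<\<kappa>} \<rightarrow>\<^sub>E UNIV) \<subseteq> Wsp \<kappa>"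
    by (auto simp: Wsp_def)
qed

lemma card_Wsp: "card (Wsp \<kappa>) = 2 ^ \<kappa>"
  using bij_betw_same_card[OF bij_betw_Wsp_PiE] by (simp add: card_PiE card_UNIV_bit)

lemma finite_Wsp: "finite (Wsp \<kappa>)"
  using card_Wsp[of \<kappa>] by (metis card.infinite power_not_zero zero_neq_numeral)

lemma subspace_Wsp: "F.subspace (Wsp \<kappa>)"
  by (auto simp: F.subspace_def Wsp_def vscale_def)

definition Wsubspace :: "nat \<Rightarrow> (nat \<Rightarrow> bit) set \<Rightarrow> bool" where
  "Wsubspace \<kappa> S \<longleftrightarrow> F.subspace S \<and> S \<subseteq> Wsp \<kappa>"

lemma Wsubspace_Wsp: "Wsubspace \<kappa> (Wsp \<kappa>)"
  by (simp add: Wsubspace_def subspace_Wsp)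

lemma Wsubspace_span: "X \<subseteq> Wsp \<kappa> \<Longrightarrow> Wsubspace \<kappa> (F.span X)"
  by (simp add: Wsubspace_def F.span_minimal subspace_Wsp)

lemma Xi_Wsp_eq: "Xi (Wsp \<kappa>) d = {S. Wsubspace \<kappa> S \<and> F.dim S = d}"
  by (auto simp: Xi_def Wsubspace_def F2subspace_def F2dim_def)

lemma finite_Wsubspace: "Wsubspace \<kappa> S \<Longrightarrow> finite S"
  unfolding Wsubspace_def using finite_Wsp finite_subset by blast

lemma finite_Wsubspaces: "finite {S. Wsubspace \<kappa> S \<and> P S}"
  by (rule finite_subset[of _ "Pow (Wsp \<kappa>)"]) (auto simp: Wsubspace_def finite_Wsp)

lemma card_Wsubspace:
  assumes "Wsubspace \<kappa> S"
  shows "card S = 2 ^ F.dim S"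
proof -
  obtain B where B: "B \<subseteq> S" "F.independent B" "S \<subseteq> F.span B" "card B = F.dim S"
    using F.basis_exists by blast
  have "F.span B = S"
    using B assms unfolding Wsubspace_def by (meson F.span_minimal subset_antisym)
  moreover have "finite B" using B finite_Wsubspace[OF assms] finite_subset by auto
  ultimately show ?thesis using card_span_independent[of B] B by auto
qed

lemma Wsubspace_dim_mono:
  assumes "Wsubspace \<kappa> U" "Wsubspace \<kappa> S" "U \<subseteq> S"
  shows "F.dim U \<le> F.dim S"
proof -
  have "card U \<le> card S" using card_mono[OF finite_Wsubspace[OF assms(2)] assms(3)] .
  then have "(2::nat) ^ F.dim U \<le> 2 ^ F.dim S"
    using card_Wsubspace[OF assms(1)] card_Wsubspace[OF assms(2)] by simp
  then show ?thesis by (rule power_le_imp_le_exp[rotated]) simp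
qed

lemma Wsubspace_eq_of_dim_eq:
  assumes "Wsubspace \<kappa> U" "Wsubspace \<kappa> S" "U \<subseteq> S" "F.dim U = F.dim S"
  shows "U = S"
  using assms card_Wsubspace[OF assms(1)] card_Wsubspace[OF assms(2)]
  by (metis card_subset_eq finite_Wsubspace)

lemma dim_Wsp: "F.dim (Wsp \<kappa>) = \<kappa>"
  using card_Wsubspace[OF Wsubspace_Wsp, of \<kappa>] card_Wsp[of \<kappa>] by simp

lemma Wsubspace_dim_le: "Wsubspace \<kappa> S \<Longrightarrow> F.dim S \<le> \<kappa>"
  using Wsubspace_dim_mono[OF _ Wsubspace_Wsp] dim_Wsp by (metis Wsubspace_def)

lemma card_Diff_Wsubspace:
  assumes "Wsubspace \<kappa> U" "Wsubspace \<kappa> S" "U \<subseteq> S"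
  shows "real (card (S - U)) = 2 ^ F.dim U * (2 ^ (F.dim S - F.dim U) - 1)"
proof -
  have "F.dim U \<le> F.dim S" using Wsubspace_dim_mono[OF assms] .
  then have "(2::real) ^ F.dim S = 2 ^ F.dim U * 2 ^ (F.dim S - F.dim U)"
    by (simp flip: power_add)
  moreover have "card (S - U) = card S - card U"
    using card_Diff_subset[OF finite_Wsubspace[OF assms(1)] assms(3)] .
  moreover have "card U \<le> card S" using card_mono[OF finite_Wsubspace[OF assms(2)] assms(3)] .
  ultimately show ?thesis
    using card_Wsubspace[OF assms(1)] card_Wsubspace[OF assms(2)]
    by (simp add: algebra_simps)
qed

lemma Wsubspace_span_insert:
  assumes "Wsubspace \<kappa> U" "v \<in> Wsp \<kappa>" "v \<notin> U"
  shows "Wsubspace \<kappa> (F.span (insert v U))" "F.dim (F.span (insert v U)) = Suc (F.dim U)"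
proof -
  have sU: "F.span U = U" using assms(1) by (simp add: Wsubspace_def)
  show W: "Wsubspace \<kappa> (F.span (insert v U))"
    using assms by (intro Wsubspace_span) (auto simp: Wsubspace_def)
  have "card (F.span (insert v U)) = 2 * card U"
    using card_span_insert[of U v] sU assms finite_Wsubspace[OF assms(1)] by simp
  then have "(2::nat) ^ F.dim (F.span (insert v U)) = 2 ^ Suc (F.dim U)"
    using card_Wsubspace[OF W] card_Wsubspace[OF assms(1)] by simp
  then show "F.dim (F.span (insert v U)) = Suc (F.dim U)"
    by (metis Suc_1 lessI power_inject_exp)
qed

section \<open>Gaussian binomial coefficients at \<open>q = 2\<close>\<close>

definition qfalling :: "nat \<Rightarrow> nat \<Rightarrow> real" where
  "qfalling m d = (\<Prod>i<d. 2 ^ (m - i) - 1)"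

definition gauss_binom :: "nat \<Rightarrow> nat \<Rightarrow> real" where
  "gauss_binom m d = qfalling m d / qfalling d d"

lemma qfalling_eq_0: "m < d \<Longrightarrow> qfalling m d = 0"
  unfolding qfalling_def by (rule prod_zero) (auto intro: bexI[of _ m])

lemma qfalling_diag_pos: "qfalling d d > 0"
  unfolding qfalling_def by (rule prod_pos) auto

lemma qfalling_Suc_Suc: "qfalling (Suc m) (Suc d) = (2 ^ Suc m - 1) * qfalling m d"
  unfolding qfalling_def by (subst prod.lessThan_Suc_shift) simp

lemma qfalling_Suc: "qfalling m (Suc d) = qfalling m d * (2 ^ (m - d) - 1)"
  unfolding qfalling_def by simp

lemma qfalling_pascal:
  "qfalling (Suc m) (Suc d) = (2 ^ Suc d - 1) * qfalling m d + 2 ^ Suc d * qfalling m (Suc d)"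
proof (cases "d \<le> m")
  case True
  then have "(2::real) ^ Suc d * 2 ^ (m - d) = 2 ^ Suc m"
    by (simp flip: power_add)
  then have split: "(2::real) ^ Suc m - 1 = (2 ^ Suc d - 1) + 2 ^ Suc d * (2 ^ (m - d) - 1)"
    by (simp add: algebra_simps)
  have "qfalling (Suc m) (Suc d) = (2 ^ Suc m - 1) * qfalling m d"
    by (rule qfalling_Suc_Suc)
  also have "\<dots> = (2 ^ Suc d - 1) * qfalling m d + 2 ^ Suc d * (qfalling m d * (2 ^ (m - d) - 1))"
    unfolding split by (simp add: algebra_simps)
  finally show ?thesis by (simp add: qfalling_Suc)
qed (simp add: qfalling_Suc_Suc qfalling_eq_0)

lemma gauss_binom_eq_0: "m < d \<Longrightarrow> gauss_binom m d = 0"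
  by (simp add: gauss_binom_def qfalling_eq_0)

lemma gauss_binom_diag: "gauss_binom m m = 1"
  using qfalling_diag_pos[of m] by (simp add: gauss_binom_def)

lemma gauss_binom_Suc_ratio:
  assumes "d \<le> m"
  shows "(2 ^ (Suc m - d) - 1) * gauss_binom (Suc m) d = (2 ^ Suc m - 1) * gauss_binom m d"
proof -
  have "(2 ^ (Suc m - d) - 1) * qfalling (Suc m) d = qfalling (Suc m) (Suc d)"
    by (simp add: qfalling_Suc)
  also have "\<dots> = (2 ^ Suc m - 1) * qfalling m d" by (rule qfalling_Suc_Suc)
  finally show ?thesis unfolding gauss_binom_def by (simp add: field_simps)
qed

lemma sum_alternating_qfalling:
  assumes "m \<le> M"
  shows "(\<Sum>i<M. (-1) ^ i * qfalling m (Suc i) / (2 ^ Suc i - 1)) = m"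
  using assms
proof (induction m)
  case (Suc m)
  define f where "f i = (-1) ^ i * qfalling m i" for i
  have "(-1) ^ i * qfalling (Suc m) (Suc i) / (2 ^ Suc i - 1)
      = (f i - f (Suc i)) + (-1) ^ i * qfalling m (Suc i) / (2 ^ Suc i - 1)" for i
  proof -
    have "(2::real) ^ Suc i - 1 \<noteq> 0"
      using one_less_power[of "2::real" "Suc i"] by simp
    then show ?thesis unfolding qfalling_pascal f_def by (simp add: field_simps)
  qed
  then have "(\<Sum>i<M. (-1) ^ i * qfalling (Suc m) (Suc i) / (2 ^ Suc i - 1))
      = (\<Sum>i<M. f i - f (Suc i)) + m"
    using Suc by (simp add: sum.distrib)
  also have "(\<Sum>i<M. f i - f (Suc i)) = f 0 - f M"
    by (rule sum_lessThan_telescope')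
  also have "f M = 0" using Suc.prems by (simp add: f_def qfalling_eq_0)
  also have "f 0 = 1" by (simp add: f_def qfalling_def)
  finally show ?case by simp
qed (simp add: qfalling_eq_0)

lemma Kc_Suc_mult: "Kc (Suc i) * (2 ^ Suc i - 1) = (-1) ^ i * qfalling (Suc i) (Suc i)"
proof (induction i)
  case 0
  then show ?case by (simp add: Kc_def qfalling_def)
next
  case (Suc i)
  have Kc_Suc: "Kc (Suc (Suc i)) = Kc (Suc i) * (1 - 2 ^ Suc i)"
    unfolding Kc_def by (simp add: prod.atLeastLessThan_Suc)
  have "Kc (Suc (Suc i)) * (2 ^ Suc (Suc i) - 1)
      = - (2 ^ Suc (Suc i) - 1) * (Kc (Suc i) * (2 ^ Suc i - 1))"
    unfolding Kc_Suc by (simp add: algebra_simps)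
  also have "\<dots> = (-1) ^ Suc i * ((2 ^ Suc (Suc i) - 1) * qfalling (Suc i) (Suc i))"
    unfolding Suc by (simp add: algebra_simps)
  also have "\<dots> = (-1) ^ Suc i * qfalling (Suc (Suc i)) (Suc (Suc i))"
    by (simp only: qfalling_Suc_Suc)
  finally show ?case .
qed

lemma sum_Kc_gauss_binom:
  assumes "m \<le> M"
  shows "(\<Sum>\<delta>=1..M. Kc \<delta> * gauss_binom m \<delta>) = m"
proof -
  have termwise: "Kc (Suc i) * gauss_binom m (Suc i) = (-1) ^ i * qfalling m (Suc i) / (2 ^ Suc i - 1)" for i
  proof -
    have "(2::real) ^ Suc i - 1 \<noteq> 0"
      using one_less_power[of "2::real" "Suc i"] by simp
    then have "Kc (Suc i) = (-1) ^ i * qfalling (Suc i) (Suc i) / (2 ^ Suc i - 1)"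
      using Kc_Suc_mult[of i] by (simp add: field_simps)
    then show ?thesis
      using qfalling_diag_pos[of "Suc i"] unfolding gauss_binom_def by (simp add: field_simps)
  qed
  have "(\<Sum>\<delta>=1..M. Kc \<delta> * gauss_binom m \<delta>) = (\<Sum>i<M. Kc (Suc i) * gauss_binom m (Suc i))"
    by (rule sum_bounds_lt_plus1[symmetric])
  also have "\<dots> = (\<Sum>i<M. (-1) ^ i * qfalling m (Suc i) / (2 ^ Suc i - 1))"
    by (simp only: termwise)
  also have "\<dots> = m" by (rule sum_alternating_qfalling[OF assms])
  finally show ?thesis .
qed

section \<open>Counting superspaces\<close>

definition superspaces :: "nat \<Rightarrow> (nat \<Rightarrow> bit) set \<Rightarrow> nat \<Rightarrow> (nat \<Rightarrow> bit) set set" where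
  "superspaces \<kappa> U d = {S. Wsubspace \<kappa> S \<and> F.dim S = d \<and> U \<subseteq> S}"

lemma finite_superspaces: "finite (superspaces \<kappa> U d)"
  unfolding superspaces_def by (rule finite_Wsubspaces)

lemma superspaces_dim_self:
  assumes "Wsubspace \<kappa> U"
  shows "superspaces \<kappa> U (F.dim U) = {U}"
proof -
  have "S = U" if "S \<in> superspaces \<kappa> U (F.dim U)" for S
  proof -
    from that have "Wsubspace \<kappa> S" "U \<subseteq> S" "F.dim U = F.dim S"
      by (auto simp: superspaces_def)
    then show "S = U" using Wsubspace_eq_of_dim_eq[OF assms] by metis
  qed
  then show ?thesis using assms by (auto simp: superspaces_def)
qed

lemma superspaces_dim_less:
  assumes "Wsubspace \<kappa> U" "d < F.dim U"
  shows "superspaces \<kappa> U d = {}"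
  using assms Wsubspace_dim_mono[OF assms(1)] by (fastforce simp: superspaces_def)

lemma superspaces_containing:
  assumes "F.span X = U"
  shows "{S \<in> superspaces \<kappa> U d. v \<in> S} = superspaces \<kappa> (F.span (insert v X)) d"
proof -
  have "U \<subseteq> S \<and> v \<in> S \<longleftrightarrow> F.span (insert v X) \<subseteq> S" if "F.subspace S" for S
    using F.span_minimal[OF _ that] F.span_superset F.span_mono[of X "insert v X"] assms
    by (metis insert_subset order_trans)
  then show ?thesis by (auto simp: superspaces_def Wsubspace_def)
qed

lemma card_superspaces_recurrence:
  assumes U: "Wsubspace \<kappa> U"
    and c: "\<And>v. v \<in> Wsp \<kappa> - U \<Longrightarrow> real (card (superspaces \<kappa> (F.span (insert v U)) d)) = c"
  shows "real (card (superspaces \<kappa> U d)) * (2 ^ (d - F.dim U) - 1) = (2 ^ (\<kappa> - F.dim U) - 1) * c"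
proof -
  let ?A = "superspaces \<kappa> U d"
  have UW: "U \<subseteq> Wsp \<kappa>" using U by (simp add: Wsubspace_def)
  have "2 ^ F.dim U * (real (card ?A) * (2 ^ (d - F.dim U) - 1)) = (\<Sum>S\<in>?A. real (card (S - U)))"
    using card_Diff_Wsubspace[OF U] by (simp add: superspaces_def mult_ac)
  also have "\<dots> = (\<Sum>S\<in>?A. \<Sum>v\<in>{v \<in> Wsp \<kappa> - U. v \<in> S}. 1)"
  proof (rule sum.cong[OF refl])
    fix S assume "S \<in> ?A"
    then have "{v \<in> Wsp \<kappa> - U. v \<in> S} = S - U" by (auto simp: superspaces_def Wsubspace_def)
    then show "real (card (S - U)) = (\<Sum>v\<in>{v \<in> Wsp \<kappa> - U. v \<in> S}. 1)" by simp
  qed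
  also have "\<dots> = (\<Sum>v\<in>Wsp \<kappa> - U. \<Sum>S\<in>{S \<in> ?A. v \<in> S}. 1)"
    using finite_Wsp by (intro sum.swap_restrict finite_superspaces) auto
  also have "\<dots> = (\<Sum>v\<in>Wsp \<kappa> - U. c)"
    using superspaces_containing[of U U] U c by (simp add: Wsubspace_def)
  also have "\<dots> = 2 ^ F.dim U * ((2 ^ (\<kappa> - F.dim U) - 1) * c)"
    using card_Diff_Wsubspace[OF U Wsubspace_Wsp UW] by (simp add: dim_Wsp)
  finally show ?thesis by simp
qed

lemma card_superspaces_of_small_dim:
  assumes "Wsubspace \<kappa> U" "\<kappa> - F.dim U \<le> \<delta>" "\<delta> \<le> \<kappa>"
  shows "real (card (superspaces \<kappa> U (\<kappa> - \<delta>))) = gauss_binom (\<kappa> - F.dim U) \<delta>"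
proof (cases "\<delta> = \<kappa> - F.dim U")
  case True
  then have "\<kappa> - \<delta> = F.dim U" using Wsubspace_dim_le[OF assms(1)] by arith
  then show ?thesis using True superspaces_dim_self[OF assms(1)] by (simp add: gauss_binom_diag)
next
  case False
  then have "\<kappa> - \<delta> < F.dim U" "\<kappa> - F.dim U < \<delta>" using assms(2,3) by arith+
  then show ?thesis using superspaces_dim_less[OF assms(1)] by (simp add: gauss_binom_eq_0)
qed

lemma card_superspaces:
  assumes "Wsubspace \<kappa> U" "\<delta> \<le> \<kappa>"
  shows "real (card (superspaces \<kappa> U (\<kappa> - \<delta>))) = gauss_binom (\<kappa> - F.dim U) \<delta>"
  using assms
proof (induction "\<kappa> - F.dim U" arbitrary: U)
  case 0
  show ?case by (rule card_superspaces_of_small_dim) (use 0 in auto)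
next
  case (Suc m)
  let ?dU = "F.dim U"
  have dU: "?dU = \<kappa> - Suc m" "Suc m \<le> \<kappa>" using Suc.hyps(2) by auto
  show ?case
  proof (cases "\<delta> \<le> m")
    case False
    show ?thesis by (rule card_superspaces_of_small_dim) (use Suc.prems dU False in auto)
  next
    case True
    have IH: "real (card (superspaces \<kappa> (F.span (insert v U)) (\<kappa> - \<delta>))) = gauss_binom m \<delta>"
      if "v \<in> Wsp \<kappa> - U" for v
    proof -
      note span = Wsubspace_span_insert[of \<kappa> U v]
      have "m = \<kappa> - F.dim (F.span (insert v U))" using span that Suc.prems(1) dU by simp
      with Suc.hyps(1)[OF this] span that Suc.prems show ?thesis by simp
    qed
    have dims: "\<kappa> - \<delta> - ?dU = Suc m - \<delta>" "\<kappa> - ?dU = Suc m"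
      using dU True by arith+
    have "real (card (superspaces \<kappa> U (\<kappa> - \<delta>))) * (2 ^ (Suc m - \<delta>) - 1)
        = (2 ^ Suc m - 1) * gauss_binom m \<delta>"
      using card_superspaces_recurrence[OF Suc.prems(1) IH] unfolding dims .
    also have "\<dots> = (2 ^ (Suc m - \<delta>) - 1) * gauss_binom (Suc m) \<delta>"
      by (rule gauss_binom_Suc_ratio[OF True, symmetric])
    finally have "real (card (superspaces \<kappa> U (\<kappa> - \<delta>))) * (2 ^ (Suc m - \<delta>) - 1)
        = (2 ^ (Suc m - \<delta>) - 1) * gauss_binom (Suc m) \<delta>" .
    moreover have "(2::real) ^ (Suc m - \<delta>) > 1" using True by (intro one_less_power) auto
    ultimately show ?thesis using Suc.hyps(2) by simp
  qed
qed

lemma rank_deficiency_expansion: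
  assumes "X \<subseteq> Wsp \<kappa>"
  shows "real \<kappa> - real (F2dim X)
       = (\<Sum>\<delta>=1..\<kappa>. Kc \<delta> * real (card {S \<in> Xi (Wsp \<kappa>) (\<kappa> - \<delta>). X \<subseteq> S}))"
proof -
  let ?U = "F.span X"
  have U: "Wsubspace \<kappa> ?U" using assms by (rule Wsubspace_span)
  have "{S \<in> Xi (Wsp \<kappa>) (\<kappa> - \<delta>). X \<subseteq> S} = superspaces \<kappa> ?U (\<kappa> - \<delta>)" for \<delta>
    unfolding Xi_Wsp_eq superspaces_def Wsubspace_def
    using F.span_minimal[of X] F.span_superset[of X] by blast
  then have "(\<Sum>\<delta>=1..\<kappa>. Kc \<delta> * real (card {S \<in> Xi (Wsp \<kappa>) (\<kappa> - \<delta>). X \<subseteq> S}))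
       = (\<Sum>\<delta>=1..\<kappa>. Kc \<delta> * gauss_binom (\<kappa> - F.dim ?U) \<delta>)"
    using card_superspaces[OF U] by simp
  also have "\<dots> = real \<kappa> - real (F2dim X)"
    using sum_Kc_gauss_binom[of "\<kappa> - F.dim ?U" \<kappa>] Wsubspace_dim_le[OF U]
    by (simp add: F2dim_def)
  finally show ?thesis ..
qed

section \<open>Columns of the generator matrix\<close>

definition col_preimage :: "nat \<Rightarrow> nat \<Rightarrow> (nat \<Rightarrow> nat \<Rightarrow> bit) \<Rightarrow> (nat \<Rightarrow> bit) set \<Rightarrow> nat set" where
  "col_preimage \<kappa> n G S = {j. j < n \<and> col \<kappa> G j \<in> S}"

lemma col_in_Wsp: "col \<kappa> G j \<in> Wsp \<kappa>"
  by (simp add: col_def Wsp_def)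

lemma nu_in_Wsp: "nu \<kappa> i \<in> Wsp \<kappa>"
  by (simp add: nu_def Wsp_def)

lemma inj_on_nu: "inj_on (nu \<kappa>) {..<2 ^ \<kappa>}"
proof (rule inj_onI)
  fix i j assume ij: "i \<in> {..<2 ^ \<kappa>}" "j \<in> {..<2 ^ \<kappa>}" and e: "nu \<kappa> i = nu \<kappa> j"
  have "bit i t = bit j t" for t
  proof (cases "t < \<kappa>")
    case True
    then have "(of_bool (odd (i div 2 ^ t)) :: bit) = of_bool (odd (j div 2 ^ t))"
      using fun_cong[OF e, of t] by (simp add: nu_def)
    then show ?thesis by (simp add: bit_iff_odd of_bool_eq_iff)
  next
    case False
    then have "(2::nat) ^ \<kappa> \<le> 2 ^ t" by (simp add: power_increasing)
    moreover have "i < 2 ^ \<kappa>" "j < 2 ^ \<kappa>" using ij by auto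
    ultimately have "i < 2 ^ t" "j < 2 ^ t" by linarith+
    then have "i div 2 ^ t = 0" "j div 2 ^ t = 0" by simp_all
    then show ?thesis by (simp add: bit_iff_odd)
  qed
  then show "i = j" by (simp add: bit_eq_iff)
qed

lemma nu_image: "nu \<kappa> ` {..<2 ^ \<kappa>} = Wsp \<kappa>"
proof -
  have "card (nu \<kappa> ` {..<2 ^ \<kappa>}) = card (Wsp \<kappa>)"
    using card_image[OF inj_on_nu] card_Wsp by simp
  moreover have "nu \<kappa> ` {..<2 ^ \<kappa>} \<subseteq> Wsp \<kappa>" using nu_in_Wsp by auto
  ultimately show ?thesis using finite_Wsp card_subset_eq by blast
qed

lemma zeta_cdv:
  "zeta \<kappa> S (cdv \<kappa> n G) = real (card (col_preimage \<kappa> n G S)) / real n"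
proof -
  let ?I = "{i. i < 2 ^ \<kappa> \<and> nu \<kappa> i \<in> S}"
  let ?A = "\<lambda>i. {j. j < n \<and> col \<kappa> G j = nu \<kappa> i}"
  have "col_preimage \<kappa> n G S = (\<Union>i\<in>?I. ?A i)"
  proof (rule set_eqI)
    fix j
    have "col \<kappa> G j \<in> nu \<kappa> ` {..<2 ^ \<kappa>}" using col_in_Wsp nu_image by metis
    then obtain i where "i < 2 ^ \<kappa>" "col \<kappa> G j = nu \<kappa> i" by auto
    then show "j \<in> col_preimage \<kappa> n G S \<longleftrightarrow> j \<in> (\<Union>i\<in>?I. ?A i)"
      by (auto simp: col_preimage_def)
  qed
  moreover have "card (\<Union>i\<in>?I. ?A i) = (\<Sum>i\<in>?I. card (?A i))"
  proof (rule card_UN_disjoint)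
    show "\<forall>i\<in>?I. \<forall>j\<in>?I. i \<noteq> j \<longrightarrow> ?A i \<inter> ?A j = {}"
      using inj_on_nu[of \<kappa>] unfolding inj_on_def by auto
  qed auto
  ultimately have "real (card (col_preimage \<kappa> n G S)) = (\<Sum>i\<in>?I. real (card (?A i)))"
    by (simp only: of_nat_sum)
  then have "real (card (col_preimage \<kappa> n G S)) / real n = (\<Sum>i\<in>?I. real (card (?A i)) / real n)"
    by (simp only: sum_divide_distrib)
  then show ?thesis unfolding zeta_def cdv_def by (rule sym)
qed

lemma binomial_ratio_eq_prod:
  assumes "\<mu> \<le> n" "0 < n"
  shows "real (N choose \<mu>) / real (n choose \<mu>)
       = (\<Prod>i<\<mu>. (real N / real n - real i / real n) / (1 - real i / real n))"
proof -
  have "real (N choose \<mu>) / real (n choose \<mu>)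
      = (\<Prod>i<\<mu>. (real N - real i) / real (\<mu> - i)) / (\<Prod>i<\<mu>. (real n - real i) / real (\<mu> - i))"
    by (simp only: binomial_gbinomial gbinomial_altdef_of_nat atLeast0LessThan)
  also have "\<dots> = (\<Prod>i<\<mu>. ((real N - real i) / real (\<mu> - i)) / ((real n - real i) / real (\<mu> - i)))"
    by (rule prod_dividef[symmetric])
  also have "\<dots> = (\<Prod>i<\<mu>. (real N / real n - real i / real n) / (1 - real i / real n))"
  proof (rule prod.cong[OF refl])
    fix i assume "i \<in> {..<\<mu>}"
    then have "real (\<mu> - i) \<noteq> 0" "real n \<noteq> 0" using assms by auto
    have cancel: "(x / c) / (y / c) = x / y" if "c \<noteq> 0" for x y c :: real
      using that by (cases "y = 0") (simp_all add: field_simps)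
    have "((real N - real i) / real (\<mu> - i)) / ((real n - real i) / real (\<mu> - i))
        = (real N - real i) / (real n - real i)"
      by (rule cancel) fact
    also have "\<dots> = ((real N - real i) / real n) / ((real n - real i) / real n)"
      by (rule cancel[symmetric]) fact
    also have "\<dots> = (real N / real n - real i / real n) / (1 - real i / real n)"
      using \<open>real n \<noteq> 0\<close> by (simp add: diff_divide_distrib)
    finally show "((real N - real i) / real (\<mu> - i)) / ((real n - real i) / real (\<mu> - i))
        = (real N / real n - real i / real n) / (1 - real i / real n)" .
  qed
  finally show ?thesis .
qed

lemma Phi_cdv:
  assumes "\<mu> \<le> n" "0 < n"
  shows "Phi \<kappa> S n \<mu> (cdv \<kappa> n G) = real (card (col_preimage \<kappa> n G S) choose \<mu>) / real (n choose \<mu>)"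
  unfolding Phi_def zeta_cdv using binomial_ratio_eq_prod[OF assms] by simp

lemma phi_cdv:
  assumes "0 < n" "0 \<le> \<epsilon>"
  shows "phi \<kappa> S n \<epsilon> (cdv \<kappa> n G) = \<epsilon> ^ (n - card (col_preimage \<kappa> n G S))"
proof -
  let ?N = "card (col_preimage \<kappa> n G S)"
  have "?N \<le> n"
    using card_mono[of "{..<n}" "col_preimage \<kappa> n G S"] by (auto simp: col_preimage_def)
  then have e: "real n * (1 - zeta \<kappa> S (cdv \<kappa> n G)) = real (n - ?N)"
    using assms(1) by (simp add: zeta_cdv field_simps)
  show ?thesis
  proof (cases "n - ?N = 0 \<or> \<epsilon> = 0")
    case False
    then have "\<epsilon> powr real (n - ?N) = \<epsilon> ^ (n - ?N)"
      using assms(2) by (intro powr_realpow) auto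
    then show ?thesis using False unfolding phi_def Let_def e by simp
  qed (auto simp: phi_def Let_def e)
qed

section \<open>Expected rank deficiency\<close>

lemma sum_weighted_card_swap:
  fixes w :: "'a \<Rightarrow> real"
  assumes "finite A" "finite B"
  shows "(\<Sum>x\<in>A. w x * real (card {y \<in> B. P x y})) = (\<Sum>y\<in>B. \<Sum>x\<in>{x \<in> A. P x y}. w x)"
proof -
  have "(\<Sum>x\<in>A. w x * real (card {y \<in> B. P x y})) = (\<Sum>x\<in>A. \<Sum>y\<in>{y \<in> B. P x y}. w x)"
    by (simp add: mult.commute)
  also have "\<dots> = (\<Sum>y\<in>B. \<Sum>x\<in>{x \<in> A. P x y}. w x)"
    using sum.swap_restrict[OF assms, of "\<lambda>x y. w x" P] by simp
  finally show ?thesis .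
qed

lemma weighted_rank_deficiency:
  fixes w :: "nat set \<Rightarrow> real"
  assumes "finite \<R>" "\<R> \<subseteq> Pow {..<n}"
  shows "(\<Sum>R\<in>\<R>. w R * (real \<kappa> - real (rankR \<kappa> G R)))
       = (\<Sum>\<delta>=1..\<kappa>. Kc \<delta> * (\<Sum>S\<in>Xi (Wsp \<kappa>) (\<kappa> - \<delta>).
            \<Sum>R\<in>{R \<in> \<R>. R \<subseteq> col_preimage \<kappa> n G S}. w R))"
proof -
  let ?X = "\<lambda>\<delta>. Xi (Wsp \<kappa>) (\<kappa> - \<delta>)"
  have expand: "real \<kappa> - real (rankR \<kappa> G R)
      = (\<Sum>\<delta>=1..\<kappa>. Kc \<delta> * real (card {S \<in> ?X \<delta>. col \<kappa> G ` R \<subseteq> S}))" for R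
    unfolding rankR_def by (rule rank_deficiency_expansion) (use col_in_Wsp in auto)
  have preimage: "{R \<in> \<R>. col \<kappa> G ` R \<subseteq> S} = {R \<in> \<R>. R \<subseteq> col_preimage \<kappa> n G S}" for S
    using assms(2) by (auto simp: col_preimage_def)
  have "(\<Sum>R\<in>\<R>. w R * (real \<kappa> - real (rankR \<kappa> G R)))
      = (\<Sum>\<delta>=1..\<kappa>. Kc \<delta> * (\<Sum>R\<in>\<R>. w R * real (card {S \<in> ?X \<delta>. col \<kappa> G ` R \<subseteq> S})))"
    unfolding expand by (simp add: sum_distrib_left sum.swap[of _ \<R>] mult_ac)
  also have "\<dots> = (\<Sum>\<delta>=1..\<kappa>. Kc \<delta> * (\<Sum>S\<in>?X \<delta>. \<Sum>R\<in>{R \<in> \<R>. col \<kappa> G ` R \<subseteq> S}. w R))"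
  proof (rule sum.cong[OF refl])
    fix \<delta>
    have "finite (?X \<delta>)" unfolding Xi_Wsp_eq by (rule finite_Wsubspaces)
    then show "Kc \<delta> * (\<Sum>R\<in>\<R>. w R * real (card {S \<in> ?X \<delta>. col \<kappa> G ` R \<subseteq> S}))
        = Kc \<delta> * (\<Sum>S\<in>?X \<delta>. \<Sum>R\<in>{R \<in> \<R>. col \<kappa> G ` R \<subseteq> S}. w R)"
      by (simp only: sum_weighted_card_swap[OF assms(1)])
  qed
  finally show ?thesis unfolding preimage .
qed

lemma sum_Pow_card:
  fixes f :: "nat \<Rightarrow> real"
  assumes "finite A"
  shows "(\<Sum>R\<in>Pow A. f (card R)) = (\<Sum>k\<le>card A. real (card A choose k) * f k)"
proof -
  have "(\<Sum>R\<in>Pow A. f (card R)) = (\<Sum>k\<le>card A. \<Sum>R\<in>{R \<in> Pow A. card R = k}. f (card R))"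
    by (rule sum.group[symmetric]) (use assms in \<open>auto simp: card_mono\<close>)
  also have "\<dots> = (\<Sum>k\<le>card A. real (card A choose k) * f k)"
  proof (rule sum.cong[OF refl])
    fix k
    have "{R \<in> Pow A. card R = k} = {R. R \<subseteq> A \<and> card R = k}" by auto
    then show "(\<Sum>R\<in>{R \<in> Pow A. card R = k}. f (card R)) = real (card A choose k) * f k"
      using n_subsets[OF assms, of k] by simp
  qed
  finally show ?thesis .
qed

lemma sum_Pow_binomial_weights:
  fixes \<epsilon> :: real
  assumes "finite A" "card A \<le> n"
  shows "(\<Sum>R\<in>Pow A. (1 - \<epsilon>) ^ card R * \<epsilon> ^ (n - card R)) = \<epsilon> ^ (n - card A)"
proof -
  have "(\<Sum>R\<in>Pow A. (1 - \<epsilon>) ^ card R * \<epsilon> ^ (n - card R))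
      = (\<Sum>k\<le>card A. real (card A choose k) * ((1 - \<epsilon>) ^ k * \<epsilon> ^ (n - k)))"
    by (rule sum_Pow_card[OF assms(1)])
  also have "\<dots> = (\<Sum>k\<le>card A. \<epsilon> ^ (n - card A) * (real (card A choose k) * (1 - \<epsilon>) ^ k * \<epsilon> ^ (card A - k)))"
  proof (rule sum.cong[OF refl])
    fix k assume "k \<in> {..card A}"
    then have "n - k = (n - card A) + (card A - k)" using assms by auto
    then show "real (card A choose k) * ((1 - \<epsilon>) ^ k * \<epsilon> ^ (n - k))
        = \<epsilon> ^ (n - card A) * (real (card A choose k) * (1 - \<epsilon>) ^ k * \<epsilon> ^ (card A - k))"
      by (simp add: power_add mult_ac)
  qed
  also have "\<dots> = \<epsilon> ^ (n - card A)"
    by (simp add: sum_distrib_left[symmetric] binomial_ring[symmetric])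
  finally show ?thesis .
qed

lemma sum_binomial_weights_card:
  fixes p e :: real
  shows "(\<Sum>k\<le>N. real (N choose k) * (p ^ k * e ^ (N - k) * real k)) = real N * p * (p + e) ^ (N - 1)"
proof (cases N)
  case (Suc M)
  have "(\<Sum>k\<le>Suc M. real (Suc M choose k) * (p ^ k * e ^ (Suc M - k) * real k))
      = (\<Sum>k\<le>M. real (Suc M choose Suc k) * (p ^ Suc k * e ^ (Suc M - Suc k) * real (Suc k)))"
    by (subst sum.atMost_Suc_shift) simp
  also have "\<dots> = (\<Sum>k\<le>M. real (Suc M) * p * (real (M choose k) * (p ^ k * e ^ (M - k))))"
  proof (rule sum.cong[OF refl])
    fix k
    have "real (Suc M choose Suc k) * real (Suc k) = real (Suc M) * real (M choose k)"
      using Suc_times_binomial_eq[of M k] by (metis of_nat_mult)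
    moreover have "real (Suc M choose Suc k) * (p ^ Suc k * e ^ (Suc M - Suc k) * real (Suc k))
        = (real (Suc M choose Suc k) * real (Suc k)) * (p * (p ^ k * e ^ (M - k)))"
      by (simp only: power_Suc diff_Suc_Suc mult_ac)
    ultimately show "real (Suc M choose Suc k) * (p ^ Suc k * e ^ (Suc M - Suc k) * real (Suc k))
        = real (Suc M) * p * (real (M choose k) * (p ^ k * e ^ (M - k)))"
      by (simp only: mult_ac)
  qed
  also have "\<dots> = real (Suc M) * p * (p + e) ^ M"
  proof -
    have "(\<Sum>k\<le>M. real (M choose k) * (p ^ k * e ^ (M - k))) = (p + e) ^ M"
      by (simp add: binomial_ring mult_ac)
    then show ?thesis by (simp add: sum_distrib_left[symmetric])
  qed
  finally show ?thesis using Suc by simp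
qed simp

lemma sum_rank_deficiency_card_subsets:
  "(\<Sum>R | R \<subseteq> {..<n} \<and> card R = \<mu>. real (card R) - real (rankR \<kappa> G R))
     = real (n choose \<mu>) * (real \<mu> - real \<kappa>) + (\<Sum>\<delta>=1..\<kappa>. Kc \<delta> *
         (\<Sum>S\<in>Xi (Wsp \<kappa>) (\<kappa> - \<delta>). real (card (col_preimage \<kappa> n G S) choose \<mu>)))"
proof -
  define \<R> where "\<R> = {R. R \<subseteq> {..<n} \<and> card R = \<mu>}"
  have fin: "finite \<R>" and sub: "\<R> \<subseteq> Pow {..<n}"
    unfolding \<R>_def by (auto intro: finite_subset[of _ "Pow {..<n}"])
  have "{R \<in> \<R>. R \<subseteq> col_preimage \<kappa> n G S} = {R. R \<subseteq> col_preimage \<kappa> n G S \<and> card R = \<mu>}" for S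
    by (auto simp: \<R>_def col_preimage_def)
  then have "card {R \<in> \<R>. R \<subseteq> col_preimage \<kappa> n G S} = card (col_preimage \<kappa> n G S) choose \<mu>" for S
    by (simp add: n_subsets col_preimage_def)
  then have deficiency: "(\<Sum>R\<in>\<R>. real \<kappa> - real (rankR \<kappa> G R))
      = (\<Sum>\<delta>=1..\<kappa>. Kc \<delta> * (\<Sum>S\<in>Xi (Wsp \<kappa>) (\<kappa> - \<delta>). real (card (col_preimage \<kappa> n G S) choose \<mu>)))"
    using weighted_rank_deficiency[OF fin sub, of "\<lambda>_. 1"] by simp
  have "(\<Sum>R\<in>\<R>. real (card R) - real (rankR \<kappa> G R))
      = (\<Sum>R\<in>\<R>. (real \<mu> - real \<kappa>) + (real \<kappa> - real (rankR \<kappa> G R)))"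
    by (rule sum.cong) (auto simp: \<R>_def)
  also have "\<dots> = real (card \<R>) * (real \<mu> - real \<kappa>)
      + (\<Sum>\<delta>=1..\<kappa>. Kc \<delta> * (\<Sum>S\<in>Xi (Wsp \<kappa>) (\<kappa> - \<delta>). real (card (col_preimage \<kappa> n G S) choose \<mu>)))"
    by (simp only: sum.distrib sum_constant deficiency)
  finally show ?thesis unfolding \<R>_def by (simp add: n_subsets)
qed

lemma Lloss_eq:
  assumes "\<mu> \<le> n" "0 < n"
  shows "Lloss \<kappa> n G \<mu> = real \<mu> - real \<kappa> +
           (\<Sum>\<delta>=1..\<kappa>. Kc \<delta> * (\<Sum>S\<in>Xi (Wsp \<kappa>) (\<kappa> - \<delta>). Phi \<kappa> S n \<mu> (cdv \<kappa> n G)))"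
proof -
  have "real (n choose \<mu>) > 0" using assms(1) by simp
  then have "Lloss \<kappa> n G \<mu> = real \<mu> - real \<kappa> + (\<Sum>\<delta>=1..\<kappa>. Kc \<delta> *
          (\<Sum>S\<in>Xi (Wsp \<kappa>) (\<kappa> - \<delta>). real (card (col_preimage \<kappa> n G S) choose \<mu>))) / real (n choose \<mu>)"
    unfolding Lloss_def sum_rank_deficiency_card_subsets by (simp add: add_divide_distrib)
  also have "\<dots> = real \<mu> - real \<kappa> + (\<Sum>\<delta>=1..\<kappa>. Kc \<delta> *
          (\<Sum>S\<in>Xi (Wsp \<kappa>) (\<kappa> - \<delta>). real (card (col_preimage \<kappa> n G S) choose \<mu>) / real (n choose \<mu>)))"
    by (simp only: sum_divide_distrib[symmetric] times_divide_eq_right)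
  finally show ?thesis unfolding Phi_cdv[OF assms] .
qed

lemma lloss_eq:
  assumes "0 \<le> \<epsilon>" "0 < n"
  shows "lloss \<kappa> n G \<epsilon> = real n * (1 - \<epsilon>) - real \<kappa> +
           (\<Sum>\<delta>=1..\<kappa>. Kc \<delta> * (\<Sum>S\<in>Xi (Wsp \<kappa>) (\<kappa> - \<delta>). phi \<kappa> S n \<epsilon> (cdv \<kappa> n G)))"
proof -
  define w where "w R = (1 - \<epsilon>) ^ card R * \<epsilon> ^ (n - card R)" for R :: "nat set"
  have total: "(\<Sum>R\<in>Pow {..<n}. w R) = 1"
    unfolding w_def using sum_Pow_binomial_weights[of "{..<n}" n \<epsilon>] by simp
  have mean: "(\<Sum>R\<in>Pow {..<n}. w R * real (card R)) = real n * (1 - \<epsilon>)"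
    unfolding w_def using sum_Pow_card[of "{..<n}" "\<lambda>k. (1 - \<epsilon>) ^ k * \<epsilon> ^ (n - k) * real k"]
    by (simp add: sum_binomial_weights_card)
  have contained: "(\<Sum>R\<in>{R \<in> Pow {..<n}. R \<subseteq> col_preimage \<kappa> n G S}. w R)
      = phi \<kappa> S n \<epsilon> (cdv \<kappa> n G)" for S
  proof -
    have "{R \<in> Pow {..<n}. R \<subseteq> col_preimage \<kappa> n G S} = Pow (col_preimage \<kappa> n G S)"
      by (auto simp: col_preimage_def)
    moreover have "card (col_preimage \<kappa> n G S) \<le> n"
      using card_mono[of "{..<n}" "col_preimage \<kappa> n G S"] by (auto simp: col_preimage_def)
    ultimately show ?thesis
      unfolding w_def phi_cdv[OF assms(2,1)]
      by (simp add: sum_Pow_binomial_weights col_preimage_def)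
  qed
  have deficiency: "(\<Sum>R\<in>Pow {..<n}. w R * (real \<kappa> - real (rankR \<kappa> G R)))
      = (\<Sum>\<delta>=1..\<kappa>. Kc \<delta> * (\<Sum>S\<in>Xi (Wsp \<kappa>) (\<kappa> - \<delta>). phi \<kappa> S n \<epsilon> (cdv \<kappa> n G)))"
    unfolding weighted_rank_deficiency[OF finite_Pow_iff[THEN iffD2, OF finite_lessThan] order_refl]
      contained ..
  have "lloss \<kappa> n G \<epsilon> = (\<Sum>R\<in>Pow {..<n}. w R * real (card R) - real \<kappa> * w R
        + w R * (real \<kappa> - real (rankR \<kappa> G R)))"
    unfolding lloss_def w_def by (rule sum.cong[OF refl]) (simp add: algebra_simps)
  also have "\<dots> = (\<Sum>R\<in>Pow {..<n}. w R * real (card R)) - real \<kappa> * (\<Sum>R\<in>Pow {..<n}. w R)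
      + (\<Sum>R\<in>Pow {..<n}. w R * (real \<kappa> - real (rankR \<kappa> G R)))"
    by (simp only: sum.distrib sum_subtractf sum_distrib_left)
  also have "\<dots> = real n * (1 - \<epsilon>) - real \<kappa> +
           (\<Sum>\<delta>=1..\<kappa>. Kc \<delta> * (\<Sum>S\<in>Xi (Wsp \<kappa>) (\<kappa> - \<delta>). phi \<kappa> S n \<epsilon> (cdv \<kappa> n G)))"
    unfolding mean total deficiency by simp
  finally show ?thesis .
qed

theorem theorem1:
  fixes \<kappa> n :: nat and G :: "nat \<Rightarrow> nat \<Rightarrow> bit"
  assumes "\<kappa> \<ge> 1" and "n \<ge> 1"
  defines "q \<equiv> cdv \<kappa> n G"
  shows "(\<forall>\<mu>::nat. 0 < \<mu> \<and> \<mu> \<le> n \<longrightarrow>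
           Lloss \<kappa> n G \<mu> = real \<mu> - real \<kappa> +
             (\<Sum>\<delta>=1..\<kappa>. Kc \<delta> * (\<Sum>S\<in>Xi (Wsp \<kappa>) (\<kappa> - \<delta>). Phi \<kappa> S n \<mu> q)))
     \<and> (\<forall>\<epsilon>::real. 0 \<le> \<epsilon> \<and> \<epsilon> \<le> 1 \<longrightarrow>
           lloss \<kappa> n G \<epsilon> = real n * (1 - \<epsilon>) - real \<kappa> +
             (\<Sum>\<delta>=1..\<kappa>. Kc \<delta> * (\<Sum>S\<in>Xi (Wsp \<kappa>) (\<kappa> - \<delta>). phi \<kappa> S n \<epsilon> q)))"
proof (intro conjI allI impI)
  fix \<mu> :: nat
  assume "0 < \<mu> \<and> \<mu> \<le> n"
  with assms(2) show "Lloss \<kappa> n G \<mu> = real \<mu> - real \<kappa> +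
      (\<Sum>\<delta>=1..\<kappa>. Kc \<delta> * (\<Sum>S\<in>Xi (Wsp \<kappa>) (\<kappa> - \<delta>). Phi \<kappa> S n \<mu> q))"
    unfolding q_def by (intro Lloss_eq) auto
next
  fix \<epsilon> :: real
  assume "0 \<le> \<epsilon> \<and> \<epsilon> \<le> 1"
  with assms(2) show "lloss \<kappa> n G \<epsilon> = real n * (1 - \<epsilon>) - real \<kappa> +
      (\<Sum>\<delta>=1..\<kappa>. Kc \<delta> * (\<Sum>S\<in>Xi (Wsp \<kappa>) (\<kappa> - \<delta>). phi \<kappa> S n \<epsilon> q))"
    unfolding q_def by (intro lloss_eq) auto
qed

end
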